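(* Let $0<c<1$, $1<t<2$, $0<b<1$, put $a_n=c^{t^n}$ and $F_n(z,w)=(z^2+a_nw,\ a_nz)$ for $n\geq1$. Let $\Omega=\{(z,w)\in\mathbb{C}^2: F_n\circ\cdots\circ F_1(z,w)\to0\}$ and let $K\subseteq\Omega$ be compact. Writing $(z_n,w_n)=F_n\circ\cdots\circ F_1(z,w)$ and $\delta_n=\max\{|z_n|,|w_n|:(z,w)\in K\}$, there exists $n_0$ such that $\delta_{n+k}\leq a_{n+k+1}b^k$ for all $n\geq n_0$ and all $k\geq0$. *)

theory Defs
  imports "HOL-Analysis.Analysis"
begin

definition seqa :: "real \<Rightarrow> real \<Rightarrow> nat \<Rightarrow> real" where
  "seqa c t n = c powr (t ^ n)"

definition Fmap :: "real \<Rightarrow> real \<Rightarrow> nat \<Rightarrow> complex \<times> complex \<Rightarrow> complex \<times> complex" where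
  "Fmap c t n p = ((fst p)^2 + of_real (seqa c t n) * snd p, of_real (seqa c t n) * fst p)"

fun orbit :: "real \<Rightarrow> real \<Rightarrow> nat \<Rightarrow> complex \<times> complex \<Rightarrow> complex \<times> complex" where
  "orbit c t 0 p = p"
| "orbit c t (Suc n) p = Fmap c t (Suc n) (orbit c t n p)"

definition basin :: "real \<Rightarrow> real \<Rightarrow> (complex \<times> complex) set" where
  "basin c t = {p. ((\<lambda>n. orbit c t n p) \<longlongrightarrow> (0, 0)) sequentially}"

end

theory Submission
  imports Defs
begin

text \<open>Write \<open>\<delta>(m)\<close> for the size of the \<open>m\<close>-th iterate. Since \<open>\<delta>(m+1) \<le> \<delta>(m)\<^sup>2 + a(m+1) \<delta>(m)\<close>,
  the condition \<open>\<delta>(m) \<le> a(m+1)\<close> gives \<open>\<delta>(m+1) \<le> 2 a(m+1)\<^sup>2 = 2 a(m+1) powr (2-t) \<cdot> a(m+2)\<close>,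
  and \<open>a(m) powr (2-t) \<rightarrow> 0\<close>; so once the orbit enters this trap late enough it stays there,
  gaining a factor \<open>b\<close> per step. Every point of the basin enters the trap infinitely often:
  otherwise \<open>\<delta>(m+1) \<le> 2 \<delta>(m)\<^sup>2\<close> eventually, so \<open>\<delta>\<close> decays doubly exponentially with ratio 2,
  faster than \<open>a(m) = c powr t\<^sup>m\<close> because \<open>t < 2\<close>, contradicting \<open>a(m+1) \<le> \<delta>(m)\<close>.
  The trap condition is open, so compactness of \<open>K\<close> yields a uniform entry time.\<close>

definition orbit_size :: "real \<Rightarrow> real \<Rightarrow> nat \<Rightarrow> complex \<times> complex \<Rightarrow> real" where
  "orbit_size c t m p = max (cmod (fst (orbit c t m p))) (cmod (snd (orbit c t m p)))"

lemma seqa_pos: "0 < c \<Longrightarrow> 0 < seqa c t n"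
  by (simp add: seqa_def)

lemma seqa_Suc: "0 < c \<Longrightarrow> seqa c t (Suc n) = seqa c t n powr t"
  by (simp add: seqa_def powr_powr mult.commute)

lemma seqa_powr_tendsto_0:
  assumes "0 < c" "c < 1" "1 < t" "0 < s"
  shows "(\<lambda>n. seqa c t n powr s) \<longlonglongrightarrow> 0"
proof -
  have "filterlim (\<lambda>n. t ^ n) at_top sequentially"
    using assms by (intro filterlim_at_infinity_imp_filterlim_at_top filterlim_realpow_sequentially_gt1) auto
  hence "filterlim (\<lambda>n. s * ln c * t ^ n) at_bot sequentially"
    using assms by (intro filterlim_tendsto_neg_mult_at_bot[OF tendsto_const]) (auto simp: mult_pos_neg)
  hence "(\<lambda>n. exp (s * ln c * t ^ n)) \<longlonglongrightarrow> 0"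
    by (rule filterlim_compose[OF exp_at_bot])
  thus ?thesis
    using assms by (simp add: seqa_def powr_powr powr_def mult_ac)
qed

lemma orbit_size_nonneg: "0 \<le> orbit_size c t m p"
  by (simp add: orbit_size_def le_max_iff_disj)

lemma orbit_size_Suc_le:
  assumes "0 < c"
  shows "orbit_size c t (Suc m) p \<le> (orbit_size c t m p)\<^sup>2 + seqa c t (Suc m) * orbit_size c t m p"
proof -
  define z w a D where "z = fst (orbit c t m p)" and "w = snd (orbit c t m p)"
    and "a = seqa c t (Suc m)" and "D = orbit_size c t m p"
  have a: "0 < a" using seqa_pos[OF assms] by (simp add: a_def)
  have zD: "cmod z \<le> D" and wD: "cmod w \<le> D"
    by (auto simp: D_def orbit_size_def z_def w_def)
  have D: "0 \<le> D" by (simp add: D_def orbit_size_nonneg)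
  have "cmod (z\<^sup>2 + of_real a * w) \<le> cmod z ^ 2 + a * cmod w"
    using a by (metis abs_of_pos norm_mult norm_of_real norm_power norm_triangle_ineq)
  also have "\<dots> \<le> D\<^sup>2 + a * D"
    using zD wD a by (intro add_mono power_mono mult_left_mono) auto
  finally have fst_le: "cmod (z\<^sup>2 + of_real a * w) \<le> D\<^sup>2 + a * D" .
  have "cmod (of_real a * z) \<le> D\<^sup>2 + a * D"
    using a zD D by (simp add: norm_mult add_increasing mult_left_mono)
  with fst_le show ?thesis
    by (simp add: orbit_size_def Fmap_def z_def w_def a_def D_def)
qed

lemma orbit_size_Suc_le_contract:
  assumes "0 < c" and small: "2 * seqa c t (Suc m) powr (2 - t) \<le> b"
    and trapped: "orbit_size c t m p \<le> seqa c t (Suc m) * x" and "0 \<le> x" "x \<le> 1"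
  shows "orbit_size c t (Suc m) p \<le> seqa c t (Suc (Suc m)) * (b * x)"
proof -
  define a D where "a = seqa c t (Suc m)" and "D = orbit_size c t m p"
  have a: "0 < a" using seqa_pos[OF assms(1)] by (simp add: a_def)
  have D: "0 \<le> D" "D \<le> a * x"
    using trapped by (simp_all add: D_def a_def orbit_size_nonneg)
  have "orbit_size c t (Suc m) p \<le> D\<^sup>2 + a * D"
    using orbit_size_Suc_le[OF assms(1)] by (simp add: a_def D_def)
  also have "\<dots> \<le> (a * x)\<^sup>2 + a * (a * x)"
    using D a by (intro add_mono power_mono mult_left_mono) auto
  also have "\<dots> \<le> 2 * a\<^sup>2 * x"
    using a \<open>0 \<le> x\<close> \<open>x \<le> 1\<close> by (simp add: power2_eq_square mult_left_le_one_le)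
  also have "\<dots> = (2 * a powr (2 - t)) * a powr t * x"
    using a by (simp add: powr_add[symmetric] powr_numeral)
  also have "\<dots> \<le> b * a powr t * x"
    using small a \<open>0 \<le> x\<close> by (intro mult_right_mono) (auto simp: a_def)
  also have "\<dots> = seqa c t (Suc (Suc m)) * (b * x)"
    using seqa_Suc[OF assms(1), of t "Suc m"] by (simp add: a_def)
  finally show ?thesis .
qed

lemma orbit_size_trapped:
  assumes "0 < c" "0 < b" "b \<le> 1" and small: "\<forall>m\<ge>N. 2 * seqa c t m powr (2 - t) \<le> b"
    and "N \<le> m" "orbit_size c t m p \<le> seqa c t (Suc m)"
  shows "orbit_size c t (m + k) p \<le> seqa c t (m + k + 1) * b ^ k"
proof (induction k)
  case 0
  then show ?case using assms by simp
next
  case (Suc k)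
  have "orbit_size c t (Suc (m + k)) p \<le> seqa c t (Suc (Suc (m + k))) * (b * b ^ k)"
    using Suc assms
    by (intro orbit_size_Suc_le_contract) (auto simp: power_le_one)
  thus ?case by simp
qed

lemma continuous_on_orbit: "continuous_on UNIV (orbit c t m)"
proof (induction m)
  case 0
  then show ?case by (simp add: continuous_on_id')
next
  case (Suc m)
  have "continuous_on UNIV (\<lambda>p. Fmap c t (Suc m) (orbit c t m p))"
    unfolding Fmap_def using Suc by (intro continuous_intros)
  then show ?case by simp
qed

lemma open_orbit_size_less: "open {p. orbit_size c t m p < r}"
proof -
  have "continuous_on UNIV (orbit_size c t m)"
    unfolding orbit_size_def[abs_def] using continuous_on_orbit[of c t m]
    by (intro continuous_intros)
  thus ?thesis by (simp add: open_Collect_less)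
qed

lemma orbit_size_tendsto_0:
  assumes "p \<in> basin c t"
  shows "(\<lambda>n. orbit_size c t n p) \<longlonglongrightarrow> 0"
proof -
  have "((\<lambda>n. orbit c t n p) \<longlongrightarrow> (0, 0)) sequentially"
    using assms by (simp add: basin_def)
  hence "(\<lambda>n. orbit_size c t n p) \<longlonglongrightarrow> max (cmod (fst (0::complex, 0::complex))) (cmod (snd (0::complex, 0::complex)))"
    unfolding orbit_size_def by (intro tendsto_intros)
  thus ?thesis by simp
qed

lemma orbit_size_double_exponential:
  assumes "0 < c" and above: "\<forall>m\<ge>M. seqa c t (Suc m) \<le> orbit_size c t m p"
  shows "2 * orbit_size c t (M + k) p \<le> (2 * orbit_size c t M p) ^ (2 ^ k)"
proof (induction k)
  case 0
  then show ?case by simp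
next
  case (Suc k)
  define D where "D = orbit_size c t (M + k) p"
  have D: "0 \<le> D" by (simp add: D_def orbit_size_nonneg)
  have "orbit_size c t (Suc (M + k)) p \<le> D\<^sup>2 + seqa c t (Suc (M + k)) * D"
    using orbit_size_Suc_le[OF assms(1)] by (simp add: D_def)
  also have "\<dots> \<le> D\<^sup>2 + D * D"
    using above D by (simp add: D_def mult_right_mono)
  finally have "2 * orbit_size c t (Suc (M + k)) p \<le> (2 * D)\<^sup>2"
    by (simp add: power2_eq_square)
  also have "\<dots> \<le> ((2 * orbit_size c t M p) ^ (2 ^ k))\<^sup>2"
    using Suc D by (intro power_mono) (auto simp: D_def)
  also have "\<dots> = (2 * orbit_size c t M p) ^ (2 ^ Suc k)"
    by (simp only: power_mult[symmetric] power_Suc2)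
  finally show ?case by simp
qed

lemma seqa_exceeds_double_exponential:
  assumes "0 < c" "c < 1" "0 < t" "t < 2" "0 < q" "q < 1"
  shows "\<exists>k. q ^ (2 ^ k) < seqa c t (M + k + 1)"
proof -
  define A where "A = t ^ (M + 1) * ln c / ln q"
  obtain k where k: "A < (2 / t) ^ k"
    using real_arch_pow[of "2 / t" A] assms by auto
  have "0 < t ^ k" "ln q < 0" using assms by auto
  hence "t ^ (M + 1) * ln c * t ^ k > 2 ^ k * ln q"
    using k by (simp add: A_def power_divide field_simps)
  hence "ln (q ^ (2 ^ k)) < ln (seqa c t (M + k + 1))"
    using assms by (simp add: seqa_def ln_powr ln_realpow power_add algebra_simps)
  hence "q ^ (2 ^ k) < seqa c t (M + k + 1)"
    using assms seqa_pos[of c t] by simp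
  thus ?thesis ..
qed

text \<open>The threshold \<open>1/4\<close> makes \<open>2 \<delta>(M) \<le> 1/2\<close>, the ratio of the doubly exponential bound.\<close>
lemma orbit_size_less_seqa_infinitely_often:
  assumes "0 < c" "c < 1" "1 < t" "t < 2" "p \<in> basin c t"
  shows "\<exists>m\<ge>N. orbit_size c t m p < seqa c t (Suc m)"
proof (rule ccontr)
  assume "\<not> ?thesis"
  hence no_entry: "\<forall>m\<ge>N. seqa c t (Suc m) \<le> orbit_size c t m p"
    by (simp add: not_less)
  have "eventually (\<lambda>n. orbit_size c t n p < 1/4) sequentially"
    using orbit_size_tendsto_0[OF assms(5)] by (rule order_tendstoD) simp
  then obtain M where "M \<ge> N" and small: "orbit_size c t M p < 1/4"
    unfolding eventually_sequentially by (meson max.cobounded1 max.cobounded2)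
  with no_entry have above: "\<forall>m\<ge>M. seqa c t (Suc m) \<le> orbit_size c t m p" by simp
  obtain k where k: "(1/2) ^ (2 ^ k) < seqa c t (M + k + 1)"
    using seqa_exceeds_double_exponential[of c t "1/2" M] assms by auto
  have "(2 * orbit_size c t M p) ^ (2 ^ k) \<le> (1/2) ^ (2 ^ k)"
    using small orbit_size_nonneg[of c t M p] by (intro power_mono) auto
  hence "2 * orbit_size c t (M + k) p \<le> (1/2) ^ (2 ^ k)"
    using orbit_size_double_exponential[OF assms(1) above, of k] by linarith
  moreover have "seqa c t (M + k + 1) \<le> orbit_size c t (M + k) p"
    using above by simp
  moreover have "0 \<le> orbit_size c t (M + k) p"
    by (rule orbit_size_nonneg)
  ultimately show False
    using k by linarith
qed

lemma compact_uniformly_trapped: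
  assumes "0 < c" "c < 1" "1 < t" "t < 2" "0 < b" "b \<le> 1"
    and small: "\<forall>m\<ge>N. 2 * seqa c t m powr (2 - t) \<le> b"
    and "compact K" "K \<subseteq> basin c t"
  shows "\<exists>n0\<ge>N. \<forall>n\<ge>n0. \<forall>p\<in>K. orbit_size c t n p \<le> seqa c t (Suc n)"
proof -
  define V where "V m = {p. orbit_size c t m p < seqa c t (Suc m)}" for m
  have "K \<subseteq> (\<Union>m\<in>{N..}. V m)"
    using orbit_size_less_seqa_infinitely_often[OF assms(1-4)] assms(9) by (fastforce simp: V_def)
  then obtain C where C: "C \<subseteq> {N..}" "finite C" "K \<subseteq> (\<Union>m\<in>C. V m)"
    using compactE_image[OF assms(8), of "{N..}" V] open_orbit_size_less V_def by metis
  define n0 where "n0 = Max (insert N C)"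
  have "orbit_size c t n p \<le> seqa c t (Suc n)" if "n \<ge> n0" "p \<in> K" for n p
  proof -
    obtain m where m: "m \<in> C" "p \<in> V m" using C(3) \<open>p \<in> K\<close> by blast
    have "m \<le> n" using m C \<open>n \<ge> n0\<close> unfolding n0_def
      by (meson Max_ge finite_insert insertI2 order_trans)
    have "orbit_size c t (m + (n - m)) p \<le> seqa c t (m + (n - m) + 1) * b ^ (n - m)"
      using m C assms by (intro orbit_size_trapped[OF _ _ _ small]) (auto simp: V_def)
    also have "\<dots> \<le> seqa c t (m + (n - m) + 1)"
      using seqa_pos[of c t] assms by (intro mult_left_le) (auto simp: power_le_one less_imp_le)
    finally show ?thesis using \<open>m \<le> n\<close> by simp
  qed
  moreover have "N \<le> n0" using C by (simp add: n0_def)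
  ultimately show ?thesis by blast
qed

theorem lemma4p1:
  fixes c t b :: real and K :: "(complex \<times> complex) set"
  assumes "0 < c" "c < 1" "1 < t" "t < 2" "0 < b" "b < 1"
    and "compact K" "K \<subseteq> basin c t"
  shows "\<exists>n0. \<forall>n\<ge>n0. \<forall>k. \<forall>p\<in>K.
           max (cmod (fst (orbit c t (n + k) p))) (cmod (snd (orbit c t (n + k) p)))
             \<le> seqa c t (n + k + 1) * b ^ k"
proof -
  have "(\<lambda>n. 2 * seqa c t n powr (2 - t)) \<longlonglongrightarrow> 2 * 0"
    using assms by (intro tendsto_mult tendsto_const seqa_powr_tendsto_0) auto
  hence "eventually (\<lambda>n. 2 * seqa c t n powr (2 - t) < b) sequentially"
    using assms by (intro order_tendstoD(2)) auto
  hence "eventually (\<lambda>n. 2 * seqa c t n powr (2 - t) \<le> b) sequentially"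
    by (rule eventually_mono) simp
  then obtain N where small: "\<forall>m\<ge>N. 2 * seqa c t m powr (2 - t) \<le> b"
    by (auto simp: eventually_sequentially)
  obtain n0 where "n0 \<ge> N" and entered: "\<forall>n\<ge>n0. \<forall>p\<in>K. orbit_size c t n p \<le> seqa c t (Suc n)"
    using compact_uniformly_trapped[OF assms(1-5) _ small assms(7,8)] assms(6) by auto
  have "orbit_size c t (n + k) p \<le> seqa c t (n + k + 1) * b ^ k" if "n \<ge> n0" "p \<in> K" for n k p
    using orbit_size_trapped[OF assms(1,5) _ small, of n p k] that entered \<open>n0 \<ge> N\<close> assms(6)
    by simp
  thus ?thesis
    unfolding orbit_size_def by blast
qed

end
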